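(* Let $\ell_n>0$, $\sigma_{n,0}>0$, $\sigma_{n,1}\ge0$, $\sigma_{n,-1}\ge0$, $\kappa_n\in\mathbb R$ for $n\in\mathbb N$, and assume $$\limsup_{n\to\infty}\sigma_{n,1}<\infty,\quad \liminf_{n\to\infty}\sigma_{n,0}>0,\quad \limsup_{n\to\infty}\sigma_{n,-1}<\infty,$$ $$0<\liminf_{n\to\infty}\sqrt{\ell_{n+1}/\ell_n}\le\limsup_{n\to\infty}\sqrt{\ell_{n+1}/\ell_n}<\infty,\qquad \limsup_{n\to\infty}\frac{|\kappa_n|}{\sqrt{\ell_n}}<\infty .$$ If a real sequence $(x_n)_{n\in\mathbb N}$ (with some $x_0\in\mathbb R$) satisfies $$\ell_n = x_n\big(\sigma_{n,1}x_{n+1}+\sigma_{n,0}x_n+\sigma_{n,-1}x_{n-1}\big)+\kappa_n x_n,\qquad n\in\mathbb N,$$ then $\liminf_{n\to\infty}x_n/\sqrt{\ell_n}>-\infty$ if and only if $\limsup_{n\to\infty}x_n/\sqrt{\ell_n}<\infty$.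
   Context: $\mathbb N=\{1,2,3,\dots\}$. The sequence $(x_n)$ need not be positive. *)

theory Defs
  imports "HOL-Analysis.Analysis"
begin

end

theory Submission
  imports Defs
begin

text \<open>Write \<open>y n = x n / sqrt (l n)\<close> and \<open>r n = sqrt (l (n + 1) / l n)\<close>. Dividing the
  recurrence by \<open>l n\<close> gives
  \<open>1 = y n * (s1 n * r n * y (n + 1) + s0 n * y n + sm1 n / r (n - 1) * y (n - 1) + \<kappa> n / sqrt (l n))\<close>,
  where all coefficients are eventually bounded and \<open>s0 n \<ge> c > 0\<close>. If \<open>y \<ge> -C\<close>, the bracket
  is at least \<open>c * y n - D\<close> whenever \<open>y n > 0\<close>, so \<open>y n * (c * y n - D) \<le> 1\<close> bounds \<open>y\<close> from
  above. The converse implication follows by applying this to \<open>(-x, -\<kappa>)\<close>, which satisfies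
  the same recurrence.\<close>

lemma quadratic_recurrence_upper_bound:
  fixes y y' y'' a b d k A A' C K c :: real
  assumes rec: "1 = y * (a * y' + b * y + d * y'' + k)"
    and c: "0 < c" "c \<le> b"
    and a: "0 \<le> a" "a \<le> A" and d: "0 \<le> d" "d \<le> A'"
    and C: "0 \<le> C" "- C \<le> y'" "- C \<le> y''" and k: "\<bar>k\<bar> \<le> K"
  shows "y \<le> max 1 ((A * C + A' * C + K + 1) / c)"
proof (cases "y \<le> 1")
  case False
  define D where "D = A * C + A' * C + K"
  have "a * y' \<ge> - (A * C)"
    using mult_left_mono[OF C(2) a(1)] mult_right_mono[OF a(2) C(1)] by linarith
  moreover have "d * y'' \<ge> - (A' * C)"
    using mult_left_mono[OF C(3) d(1)] mult_right_mono[OF d(2) C(1)] by linarith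
  moreover have "b * y \<ge> c * y" using c False by (simp add: mult_right_mono)
  ultimately have "c * y - D \<le> a * y' + b * y + d * y'' + k"
    using k unfolding D_def by linarith
  then have "y * (c * y - D) \<le> 1"
    using mult_left_mono[of _ _ y] rec False by fastforce
  then have "c * y - D < 1"
    using False by (smt (verit) mult_le_cancel_left1)
  then have "y < (D + 1) / c" using c(1) by (simp add: field_simps)
  then show ?thesis unfolding D_def by simp
qed simp

lemma recurrence_normalized:
  fixes l s1 s0 sm1 \<kappa> x y :: "nat \<Rightarrow> real" and n :: nat
  assumes y_def: "y = (\<lambda>m. x m / sqrt (l m))"
    and l_pos: "0 < l (n - 1)" "0 < l n" "0 < l (n + 1)"
    and rec: "l n = x n * (s1 n * x (n + 1) + s0 n * x n + sm1 n * x (n - 1)) + \<kappa> n * x n"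
  shows "1 = y n * (s1 n * sqrt (l (n + 1) / l n) * y (n + 1) + s0 n * y n
                    + sm1 n / sqrt (l n / l (n - 1)) * y (n - 1) + \<kappa> n / sqrt (l n))"
proof -
  have "sqrt (l n) ^ 2 = l n" using l_pos by simp
  then show ?thesis
    using l_pos rec unfolding y_def
    by (simp add: real_sqrt_divide field_simps power2_eq_square)
qed

lemma Liminf_pos_imp_eventually_ge:
  fixes f :: "'a \<Rightarrow> real"
  assumes "Liminf F (\<lambda>n. ereal (f n)) > 0"
  shows "\<exists>c>0. \<forall>\<^sub>F n in F. c \<le> f n"
proof -
  obtain c where c: "0 < ereal c" "ereal c < Liminf F (\<lambda>n. ereal (f n))"
    using ereal_dense2[OF assms] by blast
  have "\<forall>\<^sub>F n in F. c \<le> f n"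
    using less_LiminfD[OF c(2)] by (rule eventually_mono) simp
  then show ?thesis using c(1) by auto
qed

lemma limsup_normalized_finite_if_liminf_finite:
  fixes l s1 s0 sm1 \<kappa> x :: "nat \<Rightarrow> real"
  assumes l_pos: "\<And>n. n \<ge> 1 \<Longrightarrow> l n > 0"
    and s1_nonneg: "\<And>n. n \<ge> 1 \<Longrightarrow> s1 n \<ge> 0"
    and sm1_nonneg: "\<And>n. n \<ge> 1 \<Longrightarrow> sm1 n \<ge> 0"
    and lim_s1: "limsup (\<lambda>n. ereal (s1 n)) < \<infinity>"
    and lim_s0: "liminf (\<lambda>n. ereal (s0 n)) > 0"
    and lim_sm1: "limsup (\<lambda>n. ereal (sm1 n)) < \<infinity>"
    and lim_ratio_low: "liminf (\<lambda>n. ereal (sqrt (l (n + 1) / l n))) > 0"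
    and lim_ratio_up: "limsup (\<lambda>n. ereal (sqrt (l (n + 1) / l n))) < \<infinity>"
    and lim_kappa: "limsup (\<lambda>n. ereal (\<bar>\<kappa> n\<bar> / sqrt (l n))) < \<infinity>"
    and rec: "\<And>n. n \<ge> 1 \<Longrightarrow>
       l n = x n * (s1 n * x (n + 1) + s0 n * x n + sm1 n * x (n - 1)) + \<kappa> n * x n"
    and lim_below: "liminf (\<lambda>n. ereal (x n / sqrt (l n))) > -\<infinity>"
  shows "limsup (\<lambda>n. ereal (x n / sqrt (l n))) < \<infinity>"
proof -
  define y where "y = (\<lambda>n. x n / sqrt (l n))"
  obtain A where A: "\<And>n. s1 n \<le> A" using limsup_finite_then_bounded[OF lim_s1] by blast
  obtain A' where A': "\<And>n. sm1 n \<le> A'" using limsup_finite_then_bounded[OF lim_sm1] by blast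
  obtain R where R: "\<And>n. sqrt (l (n + 1) / l n) \<le> R"
    using limsup_finite_then_bounded[OF lim_ratio_up] by blast
  obtain K where K: "\<And>n. \<bar>\<kappa> n\<bar> / sqrt (l n) \<le> K"
    using limsup_finite_then_bounded[OF lim_kappa] by blast
  obtain C0 where C0: "\<And>n. C0 \<le> y n"
    using liminf_finite_then_bounded_below[OF lim_below] unfolding y_def by blast
  define C where "C = max 0 (- C0)"
  have C: "0 \<le> C" "\<And>n. - C \<le> y n"
    unfolding C_def using C0 by (auto intro: order_trans[of _ C0])
  obtain c where c: "0 < c" "\<forall>\<^sub>F n in sequentially. c \<le> s0 n"
    using Liminf_pos_imp_eventually_ge[OF lim_s0] by blast
  obtain \<rho> where \<rho>: "0 < \<rho>" "\<forall>\<^sub>F n in sequentially. \<rho> \<le> sqrt (l (n + 1) / l n)"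
    using Liminf_pos_imp_eventually_ge[OF lim_ratio_low] by blast
  obtain N where N: "\<And>n. n \<ge> N \<Longrightarrow> 1 \<le> n \<and> c \<le> s0 n \<and> \<rho> \<le> sqrt (l (n + 1) / l n)"
    using eventually_conj[OF eventually_ge_at_top[of 1] eventually_conj[OF c(2) \<rho>(2)]]
    unfolding eventually_sequentially by blast
  define M where "M = max 1 ((A * R * C + A' / \<rho> * C + K + 1) / c)"
  have "y n \<le> M" if n: "Suc N \<le> n" for n
  proof -
    have n1: "1 \<le> n" and l_pos': "0 < l (n - 1)" "0 < l n" "0 < l (n + 1)"
      using N n l_pos by force+
    have ratio_prev: "\<rho> \<le> sqrt (l n / l (n - 1))" using N[of "n - 1"] n by simp
    have "1 = y n * (s1 n * sqrt (l (n + 1) / l n) * y (n + 1) + s0 n * y n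
                     + sm1 n / sqrt (l n / l (n - 1)) * y (n - 1) + \<kappa> n / sqrt (l n))"
      using y_def l_pos' rec[OF n1] by (rule recurrence_normalized)
    then show ?thesis
      unfolding M_def
    proof (rule quadratic_recurrence_upper_bound[OF _ c(1)])
      show "s1 n * sqrt (l (n + 1) / l n) \<le> A * R"
        using A[of n] R[of n] s1_nonneg[of n] N[of n] n l_pos' by (intro mult_mono) auto
      show "sm1 n / sqrt (l n / l (n - 1)) \<le> A' / \<rho>"
        using A'[of n] sm1_nonneg[of n] N[of n] n ratio_prev \<rho>(1) by (intro frac_le) auto
      show "\<bar>\<kappa> n / sqrt (l n)\<bar> \<le> K"
        using K[of n] l_pos' by (simp add: abs_div)
    qed (use N[of n] n s1_nonneg[of n] sm1_nonneg[of n] C l_pos' in auto)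
  qed
  then have "limsup (\<lambda>n. ereal (y n)) \<le> ereal M"
    by (intro Limsup_bounded) (auto simp: eventually_sequentially)
  then show ?thesis unfolding y_def by (auto intro: order_le_less_trans)
qed

theorem corollary6p2:
  fixes l s1 s0 sm1 \<kappa> x :: "nat \<Rightarrow> real"
  assumes l_pos: "\<And>n. n \<ge> 1 \<Longrightarrow> l n > 0"
    and s0_pos: "\<And>n. n \<ge> 1 \<Longrightarrow> s0 n > 0"
    and s1_nonneg: "\<And>n. n \<ge> 1 \<Longrightarrow> s1 n \<ge> 0"
    and sm1_nonneg: "\<And>n. n \<ge> 1 \<Longrightarrow> sm1 n \<ge> 0"
    and lim_s1: "limsup (\<lambda>n. ereal (s1 n)) < \<infinity>"
    and lim_s0: "liminf (\<lambda>n. ereal (s0 n)) > 0"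
    and lim_sm1: "limsup (\<lambda>n. ereal (sm1 n)) < \<infinity>"
    and lim_ratio_low: "liminf (\<lambda>n. ereal (sqrt (l (n + 1) / l n))) > 0"
    and lim_ratio_up: "limsup (\<lambda>n. ereal (sqrt (l (n + 1) / l n))) < \<infinity>"
    and lim_kappa: "limsup (\<lambda>n. ereal (\<bar>\<kappa> n\<bar> / sqrt (l n))) < \<infinity>"
    and rec: "\<And>n. n \<ge> 1 \<Longrightarrow>
       l n = x n * (s1 n * x (n + 1) + s0 n * x n + sm1 n * x (n - 1)) + \<kappa> n * x n"
  shows "liminf (\<lambda>n. ereal (x n / sqrt (l n))) > -\<infinity> \<longleftrightarrow>
         limsup (\<lambda>n. ereal (x n / sqrt (l n))) < \<infinity>"
proof
  assume "liminf (\<lambda>n. ereal (x n / sqrt (l n))) > -\<infinity>"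
  then show "limsup (\<lambda>n. ereal (x n / sqrt (l n))) < \<infinity>"
    using limsup_normalized_finite_if_liminf_finite[OF l_pos s1_nonneg sm1_nonneg
          lim_s1 lim_s0 lim_sm1 lim_ratio_low lim_ratio_up lim_kappa rec] by blast
next
  assume "limsup (\<lambda>n. ereal (x n / sqrt (l n))) < \<infinity>"
  then have "liminf (\<lambda>n. ereal (- x n / sqrt (l n))) > -\<infinity>"
    using ereal_Liminf_uminus[of sequentially "\<lambda>n. ereal (x n / sqrt (l n))"] by simp
  moreover have "\<bar>- \<kappa> n\<bar> = \<bar>\<kappa> n\<bar>" for n by simp
  moreover have "l n = - x n * (s1 n * - x (n + 1) + s0 n * - x n + sm1 n * - x (n - 1))
                       + - \<kappa> n * - x n" if "n \<ge> 1" for n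
    using rec[OF that] by (simp add: algebra_simps)
  ultimately have "limsup (\<lambda>n. ereal (- x n / sqrt (l n))) < \<infinity>"
    using limsup_normalized_finite_if_liminf_finite[OF l_pos s1_nonneg sm1_nonneg
          lim_s1 lim_s0 lim_sm1 lim_ratio_low lim_ratio_up, of "\<lambda>n. - \<kappa> n" "\<lambda>n. - x n"]
      lim_kappa by simp
  then show "liminf (\<lambda>n. ereal (x n / sqrt (l n))) > -\<infinity>"
    using ereal_Limsup_uminus[of sequentially "\<lambda>n. ereal (x n / sqrt (l n))"]
    by (simp add: ereal_uminus_eq_reorder)
qed

end
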